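(* Let $n\ge1$ and let $\mathbf t$ be a rooted plane tree with $n+1$ vertices. Order the vertices of $\mathbf t$ in depth-first (preorder) order starting from the root, let $l_1,\dots,l_k$ be the leaves of $\mathbf t$ listed in this order, let $s_i$ be the number of vertices of $\mathbf t$ preceding $l_i$ in this order, and let $p_i$ be the depth of $l_i$ (the number of vertices on the path from the root to $l_i$, excluding $l_i$). Let $A=\{s_1,\dots,s_k\}$ and $B=\{s_i-p_i+1: 1\le i\le k\}$. Then $s_1<\dots<s_k$ and $s_1-p_1+1<\dots<s_k-p_k+1$ are increasing subsequences of $[n]=\{1,\dots,n\}$; define $\tau_{\mathbf t}:[n]\to[n]$ by $\tau_{\mathbf t}(s_i-p_i+1)=s_i$ for $1\le i\le k$, and on $[n]\setminus B$ by assigning the elements of $[n]\setminus A$ in increasing order. Then: (i) $\tau_{\mathbf t}\in\mathrm{Av}_n(321)$; (ii) the map $\mathbf t\mapsto\tau_{\mathbf t}$ is a bijection from the set of rooted plane trees with $n+1$ vertices onto $\mathrm{Av}_n(321)$; (iii) the left-to-right maxima of $\tau_{\mathbf t}$ are exactly at the positions $s_i-p_i+1$, with values $s_i$; (iv) the fixed points of $\tau_{\mathbf t}$ are exactly the points $s_i$ with $p_i=1$, i.e. they correspond to the leaves of $\mathbf t$ that are children of the root.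
   Context: $\mathrm{Av}_n(321)$ is the set of permutations $\tau\in S_n$ containing no indices $i<j<k$ with $\tau(i)>\tau(j)>\tau(k)$. A left-to-right maximum of $\tau$ is a position $m$ with $\tau(m)>\tau(j)$ for all $j<m$. *)

theory Defs
  imports "HOL-Combinatorics.Permutations"
begin

datatype ptree = Node "ptree list"

fun nverts :: "ptree \<Rightarrow> nat" where
  "nverts (Node ts) = Suc (sum_list (map nverts ts))"

text \<open>Preorder (depth-first) traversal; each vertex is recorded with its depth
  (root has depth 0) and whether it is a leaf.\<close>
fun preorder :: "nat \<Rightarrow> ptree \<Rightarrow> (nat \<times> bool) list" where
  "preorder d (Node ts) = (d, ts = []) # concat (map (preorder (Suc d)) ts)"

text \<open>The list of pairs (s_i, p_i) for the leaves l_1,...,l_k in preorder: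
  s_i = number of vertices preceding l_i, p_i = depth of l_i.\<close>
definition leaf_data :: "ptree \<Rightarrow> (nat \<times> nat) list" where
  "leaf_data t = map (\<lambda>(i, (d, b)). (i, d))
     (filter (\<lambda>(i, (d, b)). b) (enumerate 0 (preorder 0 t)))"

definition leafA :: "ptree \<Rightarrow> nat set" where
  "leafA t = set (map fst (leaf_data t))"

definition leafB :: "ptree \<Rightarrow> nat set" where
  "leafB t = set (map (\<lambda>(s, p). s - p + 1) (leaf_data t))"

text \<open>The permutation tau_t of [n], n = nverts t - 1 (identity outside [n]).\<close>
definition tau :: "ptree \<Rightarrow> nat \<Rightarrow> nat" where
  "tau t x = (let n = nverts t - 1 in
     case map_of (map (\<lambda>(s, p). (s - p + 1, s)) (leaf_data t)) x of
       Some y \<Rightarrow> y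
     | None \<Rightarrow> (if x \<in> {1..n}
                then sorted_list_of_set ({1..n} - leafA t)
                       ! card {y \<in> {1..n} - leafB t. y < x}
                else x))"

definition Av321 :: "nat \<Rightarrow> (nat \<Rightarrow> nat) set" where
  "Av321 n = {\<tau>. \<tau> permutes {1..n} \<and>
     \<not> (\<exists>i j k. 1 \<le> i \<and> i < j \<and> j < k \<and> k \<le> n \<and> \<tau> i > \<tau> j \<and> \<tau> j > \<tau> k)}"

definition ltr_max :: "nat \<Rightarrow> (nat \<Rightarrow> nat) \<Rightarrow> nat set" where
  "ltr_max n \<tau> = {m \<in> {1..n}. \<forall>j. 1 \<le> j \<and> j < m \<longrightarrow> \<tau> j < \<tau> m}"

end

theory Submission
  imports Defs
begin

text \<open>Record the preorder of a plane tree as its sequence of (depth, is-leaf) pairs. Such a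
  sequence starts at depth 0, goes one level deeper after an internal vertex, does not go deeper
  after a leaf, never returns to depth 0 and ends in a leaf; conversely every sequence with these
  properties is the preorder of exactly one tree. After a leaf the depth does not increase, so
  the starting points \<open>s\<^sub>i - p\<^sub>i + 1\<close> increase, and the intervals \<open>[s\<^sub>i - p\<^sub>i + 1, s\<^sub>i]\<close> cover
  \<open>[n]\<close> because every vertex descends without interruption to the next leaf.

  \<open>\<tau>\<close> is increasing on \<open>B\<close> and on its complement, hence 321-avoiding. A position \<open>x \<notin> B\<close> lies in
  some interval \<open>[b, a]\<close> with \<open>b < x\<close>, and counting the elements of \<open>A\<close> and \<open>B\<close> below \<open>x\<close> shows
  \<open>\<tau> x < a = \<tau> b\<close> and \<open>\<tau> x < x\<close>; so \<open>x\<close> is neither a left-to-right maximum nor a fixed point,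
  while every \<open>b \<in> B\<close> is a left-to-right maximum.

  A 321-avoider is increasing off its left-to-right maxima, hence determined by them, and a
  tree is determined by its leaves and their depths; this gives injectivity. For surjectivity,
  the tree of \<open>\<sigma>\<close> has vertex \<open>j\<close> at depth \<open>j + 1 - \<beta> j\<close>, where \<open>\<beta> j\<close> is the first position at
  which \<open>\<sigma>\<close> reaches a value \<open>\<ge> j\<close>, and vertex \<open>j\<close> is a leaf iff \<open>j\<close> is a left-to-right maximum value.\<close>

section \<open>Ranks in finite sets of naturals\<close>

lemma card_less_sorted_list_of_set_nth:
  fixes S :: "nat set"
  assumes "finite S" "r < card S"
  shows "card {y \<in> S. y < sorted_list_of_set S ! r} = r"
proof -
  define xs where "xs = sorted_list_of_set S"
  have sorted: "sorted_wrt (<) xs" and set_xs: "set xs = S" and len: "length xs = card S"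
    using assms by (auto simp: xs_def)
  have "{y \<in> S. y < xs ! r} = set (take r xs)"
  proof safe
    fix y assume "y \<in> S" "y < xs ! r"
    then obtain i where i: "i < length xs" "y = xs ! i" using set_xs by (metis in_set_conv_nth)
    have "i < r"
      using sorted_wrt_nth_less[OF sorted, of r i] i \<open>y < xs ! r\<close> assms len
      by (metis linorder_neqE_nat order.asym)
    then show "y \<in> set (take r xs)" using i by (auto simp: in_set_conv_nth)
  next
    fix y assume "y \<in> set (take r xs)"
    then obtain i where i: "i < r" "y = xs ! i" using assms len by (auto simp: in_set_conv_nth)
    then show "y \<in> S" using set_xs assms len by auto
    show "y < xs ! r" using sorted i assms len sorted_wrt_nth_less by metis
  qed
  moreover have "distinct xs" using sorted strict_sorted_iff by blast
  ultimately show ?thesis using assms len by (simp add: xs_def distinct_card)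
qed

lemma sorted_list_of_set_nth_card_less:
  fixes S :: "nat set"
  assumes "finite S" "z \<in> S"
  shows "sorted_list_of_set S ! card {y \<in> S. y < z} = z"
proof -
  obtain i where "i < length (sorted_list_of_set S)" "z = sorted_list_of_set S ! i"
    using assms by (metis in_set_conv_nth set_sorted_list_of_set)
  then show ?thesis using card_less_sorted_list_of_set_nth[OF assms(1), of i] assms by simp
qed

lemma sorted_list_of_set_nth_mem:
  fixes S :: "nat set"
  assumes "finite S" "r < card S"
  shows "sorted_list_of_set S ! r \<in> S"
  using assms by (metis length_sorted_list_of_set nth_mem set_sorted_list_of_set)

lemma card_less_less_card:
  fixes S :: "nat set"
  assumes "finite S" "x \<in> S"
  shows "card {y \<in> S. y < x} < card S"
  using assms by (intro psubset_card_mono) auto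

lemma card_less_strict_mono:
  fixes S :: "nat set"
  assumes "finite S" "x \<in> S" "x < x'"
  shows "card {y \<in> S. y < x} < card {y \<in> S. y < x'}"
  using assms by (intro psubset_card_mono) auto

lemma sorted_list_of_set_nth_less_iff:
  fixes S :: "nat set"
  assumes "finite S" "r < card S"
  shows "sorted_list_of_set S ! r < z \<longleftrightarrow> r < card {y \<in> S. y < z}"
proof -
  define w where "w = sorted_list_of_set S ! r"
  have w: "w \<in> S" "card {y \<in> S. y < w} = r"
    using sorted_list_of_set_nth_mem card_less_sorted_list_of_set_nth assms w_def by auto
  have "card {y \<in> S. y < z} \<le> r" if "z \<le> w"
    using that w assms by (subst w(2)[symmetric], intro card_mono) auto
  then show ?thesis
    using card_less_strict_mono[OF assms(1) w(1)] w unfolding w_def[symmetric] by fastforce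
qed

lemma strict_mono_on_eq_sorted_list_of_set_nth:
  fixes f :: "nat \<Rightarrow> nat"
  assumes "finite C" "f ` C = D" "\<And>x y. x \<in> C \<Longrightarrow> y \<in> C \<Longrightarrow> x < y \<Longrightarrow> f x < f y" "x \<in> C"
  shows "f x = sorted_list_of_set D ! card {y \<in> C. y < x}"
proof -
  have inj: "inj_on f C" using assms(3) by (intro strict_mono_on_imp_inj_on strict_mono_onI)
  have "{y \<in> D. y < f x} = f ` {y \<in> C. y < x}"
    using assms by (auto simp: image_iff) (metis linorder_neqE_nat order.asym)
  then have "card {y \<in> D. y < f x} = card {y \<in> C. y < x}"
    using inj by (metis (no_types, lifting) card_image inj_on_subset mem_Collect_eq subsetI)
  then show ?thesis
    using sorted_list_of_set_nth_card_less[of D "f x"] assms by auto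
qed

lemma card_less_Diff_add_card_less:
  fixes S :: "nat set"
  assumes "S \<subseteq> {1..n}" "x \<le> Suc n"
  shows "card {y \<in> {1..n} - S. y < x} + card {y \<in> S. y < x} = x - 1"
proof -
  have "card {y \<in> {1..n} - S. y < x} + card {y \<in> S. y < x}
      = card ({y \<in> {1..n} - S. y < x} \<union> {y \<in> S. y < x})"
  proof (rule card_Un_disjoint[symmetric])
    show "finite {y \<in> T. y < x}" for T :: "nat set"
      using finite_Collect_less_nat[of x] by (rule finite_subset[rotated]) auto
  qed auto
  also have "\<dots> = card {1..<x}" using assms by (intro arg_cong[where f = card]) auto
  finally show ?thesis by simp
qed

lemma sorted_wrt_map_nth_less_iff:
  assumes "sorted_wrt (<) (map f xs)" "i < length xs" "j < length xs"
  shows "f (xs ! i) < (f (xs ! j) :: 'b :: linorder) \<longleftrightarrow> i < j"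
  using sorted_wrt_nth_less[OF assms(1)] assms
  by (metis length_map linorder_neqE_nat nth_map order.asym)

lemma card_less_image_nth:
  fixes f :: "'a \<Rightarrow> nat"
  assumes "sorted_wrt (<) (map f xs)" "i < length xs"
  shows "card {y \<in> f ` set xs. y < f (xs ! i)} = i"
proof -
  have "distinct (map f xs)" using assms(1) strict_sorted_iff by blast
  then have sorted_eq: "sorted_list_of_set (f ` set xs) = map f xs" and "card (f ` set xs) = length xs"
    using assms(1) sorted_list_of_set.idem_if_sorted_distinct[of "map f xs"] distinct_card[of "map f xs"]
    by (simp_all add: strict_sorted_iff)
  then have "card {y \<in> f ` set xs. y < sorted_list_of_set (f ` set xs) ! i} = i"
    using assms(2) by (intro card_less_sorted_list_of_set_nth) simp_all
  then show ?thesis using sorted_eq assms(2) by simp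
qed

lemma sorted_wrt_filter_upt:
  assumes "\<And>i j. i < j \<Longrightarrow> j < N \<Longrightarrow> Q i \<Longrightarrow> Q j \<Longrightarrow> R i j"
  shows "sorted_wrt R (filter Q [0..<N])"
proof -
  have "sorted_wrt (<) (filter Q [0..<N])" by (intro sorted_wrt_filter) simp
  then show ?thesis by (rule sorted_wrt_mono_rel[rotated]) (auto intro: assms)
qed

section \<open>Preorder sequences of plane trees\<close>

text \<open>After an internal vertex the preorder descends to its first child; after a leaf it moves to a
  later sibling of the leaf or of one of its ancestors.\<close>
definition preorder_step :: "nat \<times> bool \<Rightarrow> nat \<times> bool \<Rightarrow> bool" where
  "preorder_step x y \<longleftrightarrow> (if snd x then fst y \<le> fst x else fst y = Suc (fst x))"

definition preorder_seq :: "nat \<Rightarrow> (nat \<times> bool) list \<Rightarrow> bool" where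
  "preorder_seq d P \<longleftrightarrow> P \<noteq> [] \<and> fst (hd P) = d \<and> (\<forall>p \<in> set (tl P). d < fst p)
     \<and> successively preorder_step P \<and> snd (last P)"

definition forest_preorder_seq :: "nat \<Rightarrow> (nat \<times> bool) list \<Rightarrow> bool" where
  "forest_preorder_seq d R \<longleftrightarrow> R = [] \<or> (fst (hd R) = d \<and> (\<forall>p \<in> set R. d \<le> fst p)
     \<and> successively preorder_step R \<and> snd (last R))"

lemma preorder_ne_Nil: "preorder d t \<noteq> []"
  by (cases t) simp

lemma length_preorder: "length (preorder d t) = nverts t"
proof (induction t arbitrary: d)
  case (Node ts)
  have "map (length \<circ> preorder (Suc d)) ts = map nverts ts"
    using Node by auto
  then show ?case by (simp add: length_concat del: map_eq_conv)
qed

lemma preorder_seq_depth_ge: "preorder_seq d P \<Longrightarrow> p \<in> set P \<Longrightarrow> d \<le> fst p"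
  unfolding preorder_seq_def by (cases P) auto

lemma preorder_seq_of_nth:
  assumes "P \<noteq> []" "fst (P ! 0) = d" "\<And>j. 0 < j \<Longrightarrow> j < length P \<Longrightarrow> d < fst (P ! j)"
    "\<And>j. Suc j < length P \<Longrightarrow> preorder_step (P ! j) (P ! Suc j)" "snd (P ! (length P - 1))"
  shows "preorder_seq d P"
proof -
  have "d < fst p" if "p \<in> set (tl P)" for p
    using that assms(3) by (auto simp: in_set_conv_nth nth_tl)
  then show ?thesis using assms
    by (simp add: preorder_seq_def hd_conv_nth last_conv_nth successively_conv_nth)
qed

lemma forest_preorder_seq_append_tree:
  assumes "preorder_seq d X" "forest_preorder_seq d R"
  shows "forest_preorder_seq d (X @ R)"
proof -
  have X: "X \<noteq> []" "fst (hd X) = d" "successively preorder_step X" "snd (last X)"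
    using assms(1) by (auto simp: preorder_seq_def)
  have "successively preorder_step (X @ R)"
  proof (cases "R = []")
    case False
    then have "fst (hd R) = d" "successively preorder_step R"
      using assms(2) by (auto simp: forest_preorder_seq_def)
    moreover have "d \<le> fst (last X)" using preorder_seq_depth_ge[OF assms(1)] X(1) by simp
    ultimately show ?thesis using X by (auto simp: successively_append_iff preorder_step_def)
  qed (use X in simp)
  moreover have "snd (last (X @ R))"
    using X assms(2) by (cases "R = []") (auto simp: forest_preorder_seq_def)
  ultimately show ?thesis
    using X assms preorder_seq_depth_ge[OF assms(1)] by (auto simp: forest_preorder_seq_def)
qed

lemma forest_preorder_seq_concat:
  assumes "\<And>t. t \<in> set ts \<Longrightarrow> preorder_seq d (preorder d t)"
  shows "forest_preorder_seq d (concat (map (preorder d) ts))"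
  using assms
proof (induction ts)
  case Nil
  then show ?case by (simp add: forest_preorder_seq_def)
next
  case (Cons t ts)
  then show ?case using forest_preorder_seq_append_tree by simp
qed

lemma preorder_seq_preorder: "preorder_seq d (preorder d t)"
proof (induction t arbitrary: d)
  case (Node ts)
  define R where "R = concat (map (preorder (Suc d)) ts)"
  have R: "forest_preorder_seq (Suc d) R"
    unfolding R_def using Node.IH by (rule forest_preorder_seq_concat)
  have "R = [] \<longleftrightarrow> ts = []" unfolding R_def using preorder_ne_Nil by (cases ts) auto
  then show ?case
    using R by (cases R) (auto simp: preorder_seq_def forest_preorder_seq_def preorder_step_def R_def[symmetric])
qed

lemma forest_preorder_seq_split:
  assumes "forest_preorder_seq d (r # R)"
  defines "X \<equiv> r # takeWhile (\<lambda>p. d < fst p) R" and "Y \<equiv> dropWhile (\<lambda>p. d < fst p) R"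
  shows "preorder_seq d X" "forest_preorder_seq d Y" "r # R = X @ Y"
proof -
  show split: "r # R = X @ Y" by (simp add: X_def Y_def)
  have R: "fst r = d" "\<forall>p \<in> set (r # R). d \<le> fst p" "successively preorder_step (r # R)"
    "snd (last (r # R))"
    using assms(1) by (auto simp: forest_preorder_seq_def)
  have sX: "successively preorder_step X" and sY: "successively preorder_step Y"
    and step: "Y \<noteq> [] \<Longrightarrow> preorder_step (last X) (hd Y)"
    using R(3) split by (auto simp: successively_append_iff X_def simp del: append_Cons)
  have hdY: "fst (hd Y) = d" if "Y \<noteq> []"
  proof -
    have "\<not> d < fst (hd Y)" using that hd_dropWhile unfolding Y_def by blast
    moreover have "hd Y \<in> set (r # R)"
      using set_dropWhileD[OF hd_in_set[OF that[unfolded Y_def]]] unfolding Y_def by simp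
    ultimately show ?thesis using R(2) by fastforce
  qed
  have "snd (last X)"
  proof (cases "Y = []")
    case True
    then show ?thesis using R(4) split by (metis append.right_neutral)
  next
    case False
    have "set X \<subseteq> set (r # R)" by (auto simp: X_def dest: set_takeWhileD)
    then have "last X \<in> set (r # R)" using last_in_set[of X] by (auto simp: X_def)
    then have "d \<le> fst (last X)" using R(2) by blast
    then show ?thesis using step[OF False] hdY[OF False] by (auto simp: preorder_step_def split: if_splits)
  qed
  then show "preorder_seq d X"
    using R sX by (auto simp: preorder_seq_def X_def dest: set_takeWhileD)
  show "forest_preorder_seq d Y"
    using hdY sY R split by (auto simp: forest_preorder_seq_def)
qed

lemma ex_preorder_if_preorder_seq: "preorder_seq d P \<Longrightarrow> \<exists>t. preorder d t = P"
proof (induction "length P" arbitrary: d P rule: less_induct)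
  case less
  note tree_IH = less.hyps and P_seq = less.prems
  have forest: "\<exists>ts. concat (map (preorder e) ts) = R"
    if "forest_preorder_seq e R" "length R < length P" for e R
    using that
  proof (induction "length R" arbitrary: R rule: less_induct)
    case less
    show ?case
    proof (cases R)
      case Nil
      then show ?thesis by (intro exI[of _ "[]"]) simp
    next
      case (Cons r R')
      note split = forest_preorder_seq_split[OF less.prems(1)[unfolded Cons]]
      have "length (r # takeWhile (\<lambda>p. e < fst p) R') < length P"
        using length_takeWhile_le[of "\<lambda>p. e < fst p" R'] less.prems(2) Cons by simp
      then obtain t where t: "preorder e t = r # takeWhile (\<lambda>p. e < fst p) R'"
        using split(1) tree_IH by blast
      have "length (dropWhile (\<lambda>p. e < fst p) R') < length R"
        using length_dropWhile_le[of "\<lambda>p. e < fst p" R'] Cons by simp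
      then obtain ts where "concat (map (preorder e) ts) = dropWhile (\<lambda>p. e < fst p) R'"
        using less.hyps split(2) less.prems(2) by fastforce
      then show ?thesis using split(3) Cons t by (intro exI[of _ "t # ts"]) simp
    qed
  qed
  obtain p R where P: "P = p # R" using P_seq by (cases P) (auto simp: preorder_seq_def)
  show ?case
  proof (cases "R = []")
    case True
    then have "P = [(d, True)]" using P_seq P by (cases p) (auto simp: preorder_seq_def)
    then show ?thesis by (intro exI[of _ "Node []"]) simp
  next
    case False
    then have "preorder_step p (hd R)" "d < fst (hd R)" "fst p = d"
      using P_seq P by (auto simp: preorder_seq_def successively_Cons)
    then have p: "\<not> snd p" "fst (hd R) = Suc d" by (auto simp: preorder_step_def split: if_splits)
    have "forest_preorder_seq (Suc d) R"
      using P_seq P False p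
      by (auto simp: preorder_seq_def forest_preorder_seq_def Suc_le_eq successively_Cons)
    then obtain ts where "concat (map (preorder (Suc d)) ts) = R"
      using forest P by auto
    then have "preorder d (Node ts) = P"
      using P p False \<open>fst p = d\<close> by (cases p) auto
    then show ?thesis by blast
  qed
qed

lemma preorder_seq_tl_eq_takeWhile:
  assumes "preorder_seq d X" "forest_preorder_seq d R"
  shows "tl X = takeWhile (\<lambda>p. d < fst p) (tl X @ R)"
proof -
  have "\<forall>p \<in> set (tl X). d < fst p" using assms(1) by (simp add: preorder_seq_def)
  moreover have "takeWhile (\<lambda>p. d < fst p) R = []"
    using assms(2) by (cases R) (auto simp: forest_preorder_seq_def)
  ultimately show ?thesis by (simp add: takeWhile_append2)
qed

lemma preorder_inj: "preorder d t = preorder d t' \<Longrightarrow> t = t'"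
proof (induction t arbitrary: d t')
  case (Node ts)
  obtain ts' where t': "t' = Node ts'" by (cases t')
  have "concat (map (preorder (Suc d)) ts) = concat (map (preorder (Suc d)) ts')"
    using Node.prems t' by simp
  with Node.IH have "ts = ts'"
  proof (induction ts arbitrary: ts')
    case Nil
    then show ?case using preorder_ne_Nil by (cases ts') auto
  next
    case (Cons t ts ts')
    then obtain t1 ts1 where ts': "ts' = t1 # ts1" using preorder_ne_Nil by (cases ts') auto
    define X where "X = preorder (Suc d) t"
    define X1 where "X1 = preorder (Suc d) t1"
    define R where "R = concat (map (preorder (Suc d)) ts)"
    define R1 where "R1 = concat (map (preorder (Suc d)) ts1)"
    have eq: "X @ R = X1 @ R1" using Cons.prems ts' by (simp add: X_def X1_def R_def R1_def)
    have X: "X \<noteq> []" "X1 \<noteq> []" using preorder_ne_Nil X_def X1_def by auto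
    have forests: "forest_preorder_seq (Suc d) R" "forest_preorder_seq (Suc d) R1"
      unfolding R_def R1_def by (auto intro: forest_preorder_seq_concat preorder_seq_preorder)
    have "tl X @ R = tl X1 @ R1" using eq X by (metis append_Cons list.collapse list.inject)
    then have "tl X = tl X1"
      using preorder_seq_tl_eq_takeWhile[OF preorder_seq_preorder forests(1), of t]
        preorder_seq_tl_eq_takeWhile[OF preorder_seq_preorder forests(2), of t1]
      unfolding X_def X1_def by simp
    then have "X = X1" using eq X by (metis hd_append2 list.collapse)
    then have "t = t1" "R = R1" using eq Cons.prems(1) by (auto simp: X_def X1_def)
    then show ?case using Cons ts' by (auto simp: R_def R1_def)
  qed
  then show ?case using t' by simp
qed

definition leaves :: "(nat \<times> bool) list \<Rightarrow> (nat \<times> nat) set" where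
  "leaves P = {(j, fst (P ! j)) | j. j < length P \<and> snd (P ! j)}"

lemma leaf_data_conv_filter:
  "leaf_data t = map (\<lambda>j. (j, fst (preorder 0 t ! j)))
     (filter (\<lambda>j. snd (preorder 0 t ! j)) [0..<nverts t])"
proof -
  have "enumerate 0 P = map (\<lambda>j. (j, P ! j)) [0..<length P]" for P :: "(nat \<times> bool) list"
    by (rule nth_equalityI) (auto simp: enumerate_eq_zip)
  then show ?thesis
    by (simp add: leaf_data_def length_preorder filter_map comp_def case_prod_beta)
qed

lemma set_leaf_data: "set (leaf_data t) = leaves (preorder 0 t)"
  by (auto simp: leaf_data_conv_filter leaves_def length_preorder)

locale tree_seq =
  fixes P :: "(nat \<times> bool) list"
  assumes preorder_seq: "preorder_seq 0 P"
begin

abbreviation depth :: "nat \<Rightarrow> nat" where "depth j \<equiv> fst (P ! j)"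
abbreviation is_leaf :: "nat \<Rightarrow> bool" where "is_leaf j \<equiv> snd (P ! j)"

lemma depth_0: "depth 0 = 0"
  using preorder_seq unfolding preorder_seq_def by (auto simp: hd_conv_nth)

lemma depth_pos:
  assumes "0 < j" "j < length P"
  shows "0 < depth j"
proof -
  have "P ! j = tl P ! (j - 1)" "j - 1 < length (tl P)" using assms by (auto simp: nth_tl)
  then have "P ! j \<in> set (tl P)" by simp
  then show ?thesis using preorder_seq by (simp add: preorder_seq_def)
qed

lemma preorder_step_nth: "Suc j < length P \<Longrightarrow> preorder_step (P ! j) (P ! Suc j)"
  using preorder_seq by (simp add: preorder_seq_def successively_conv_nth)

lemma depth_Suc_if_leaf: "Suc j < length P \<Longrightarrow> is_leaf j \<Longrightarrow> depth (Suc j) \<le> depth j"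
  using preorder_step_nth by (force simp: preorder_step_def)

lemma depth_Suc_if_not_leaf: "Suc j < length P \<Longrightarrow> \<not> is_leaf j \<Longrightarrow> depth (Suc j) = Suc (depth j)"
  using preorder_step_nth by (force simp: preorder_step_def)

lemma is_leaf_last: "is_leaf (length P - 1)"
  using preorder_seq unfolding preorder_seq_def by (auto simp: last_conv_nth)

lemma depth_le_add: "j \<le> j' \<Longrightarrow> j' < length P \<Longrightarrow> depth j' \<le> depth j + (j' - j)"
proof (induction j' rule: dec_induct)
  case (step m)
  then have "depth (Suc m) \<le> Suc (depth m)"
    using depth_Suc_if_leaf depth_Suc_if_not_leaf by (cases "is_leaf m") force+
  then show ?case using step by simp
qed simp

lemma depth_eq_add:
  "j \<le> j' \<Longrightarrow> j' < length P \<Longrightarrow> (\<And>l. j \<le> l \<Longrightarrow> l < j' \<Longrightarrow> \<not> is_leaf l) \<Longrightarrow>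
    depth j' = depth j + (j' - j)"
proof (induction j' rule: dec_induct)
  case (step m)
  then show ?case using depth_Suc_if_not_leaf[of m] by simp
qed simp

lemma depth_le: "j < length P \<Longrightarrow> depth j \<le> j"
  using depth_le_add[of 0 j] depth_0 by simp

lemma root_not_leaf: "2 \<le> length P \<Longrightarrow> \<not> is_leaf 0"
  using depth_Suc_if_leaf[of 0] depth_pos[of 1] depth_0 by force

text \<open>Past a leaf the depth no longer increases, so \<open>j - depth j\<close> jumps up.\<close>
lemma leaf_start_less:
  assumes "is_leaf j" "j < j'" "j' < length P"
  shows "j - depth j < j' - depth j'"
proof -
  have "depth j' \<le> depth (Suc j) + (j' - Suc j)" using depth_le_add[of "Suc j" j'] assms by simp
  moreover have "depth (Suc j) \<le> depth j" using depth_Suc_if_leaf assms by simp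
  ultimately show ?thesis using assms depth_le[of j] depth_le[of j'] by simp
qed

definition next_leaf :: "nat \<Rightarrow> nat" where
  "next_leaf x = (LEAST l. x \<le> l \<and> l < length P \<and> is_leaf l)"

lemma next_leaf:
  assumes "x < length P"
  shows "x \<le> next_leaf x" "next_leaf x < length P" "is_leaf (next_leaf x)"
    "depth (next_leaf x) = depth x + (next_leaf x - x)"
proof -
  have ex: "\<exists>l. x \<le> l \<and> l < length P \<and> is_leaf l"
    using assms is_leaf_last by (intro exI[of _ "length P - 1"]) auto
  show bounds: "x \<le> next_leaf x" "next_leaf x < length P" "is_leaf (next_leaf x)"
    using LeastI_ex[OF ex] by (auto simp: next_leaf_def)
  have "\<not> is_leaf l" if "x \<le> l" "l < next_leaf x" for l
    using not_less_Least[of l "\<lambda>l. x \<le> l \<and> l < length P \<and> is_leaf l"] that bounds(2)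
    by (auto simp: next_leaf_def)
  then show "depth (next_leaf x) = depth x + (next_leaf x - x)"
    using depth_eq_add bounds by blast
qed

lemma ex_leaf_covering:
  assumes "0 < x" "x < length P"
  shows "\<exists>j. is_leaf j \<and> j < length P \<and> x \<le> j \<and> j - depth j < x"
  using next_leaf[OF assms(2)] depth_pos[OF assms] depth_le[OF assms(2)]
  by (intro exI[of _ "next_leaf x"]) auto

text \<open>Every depth is read off from the next leaf.\<close>
lemma eq_if_leaves_eq:
  assumes "tree_seq Q" "length Q = length P" "leaves Q = leaves P"
  shows "Q = P"
proof (rule nth_equalityI)
  interpret Q: tree_seq Q by fact
  show "length Q = length P" by fact
  have leaf_iff: "snd (Q ! j) \<longleftrightarrow> is_leaf j" if "j < length P" for j
  proof -
    have "snd (R ! j) \<longleftrightarrow> j \<in> fst ` leaves R" if "j < length R" for R :: "(nat \<times> bool) list"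
      using that by (force simp: leaves_def)
    then show ?thesis using assms(2,3) \<open>j < length P\<close> by metis
  qed
  have depth_eq: "fst (Q ! j) = depth j" if "j < length P" "is_leaf j" for j
  proof -
    have "(j, depth j) \<in> leaves Q" using assms(3) that by (auto simp: leaves_def)
    then show ?thesis by (auto simp: leaves_def)
  qed
  fix x assume x: "x < length Q"
  have "Q.next_leaf x = next_leaf x"
    unfolding next_leaf_def Q.next_leaf_def using assms(2) leaf_iff by (intro arg_cong[of _ _ Least]) auto
  moreover have "fst (Q ! Q.next_leaf x) = depth (next_leaf x)"
    using calculation depth_eq next_leaf[of x] x assms(2) by simp
  ultimately have "fst (Q ! x) = depth x"
    using next_leaf(4)[of x] Q.next_leaf(4)[OF x] x assms(2) by simp
  then show "Q ! x = P ! x" using leaf_iff x assms(2) by (simp add: prod_eq_iff)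
qed

end

section \<open>The permutation of an interval cover\<close>

definition cover_perm :: "nat \<Rightarrow> (nat \<times> nat) list \<Rightarrow> nat \<Rightarrow> nat" where
  "cover_perm n L x = (case map_of L x of
       Some y \<Rightarrow> y
     | None \<Rightarrow> (if x \<in> {1..n} then sorted_list_of_set ({1..n} - snd ` set L)
                  ! card {y \<in> {1..n} - fst ` set L. y < x} else x))"

text \<open>For a tree, \<open>L\<close> lists the intervals \<open>[s\<^sub>i - p\<^sub>i + 1, s\<^sub>i]\<close>.\<close>
locale interval_cover =
  fixes n :: nat and L :: "(nat \<times> nat) list"
  assumes sorted_fst: "sorted_wrt (<) (map fst L)"
    and sorted_snd: "sorted_wrt (<) (map snd L)"
    and interval: "\<And>p. p \<in> set L \<Longrightarrow> 1 \<le> fst p \<and> fst p \<le> snd p \<and> snd p \<le> n"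
    and covers: "\<And>x. 1 \<le> x \<Longrightarrow> x \<le> n \<Longrightarrow> \<exists>p \<in> set L. fst p \<le> x \<and> x \<le> snd p"
begin

abbreviation B :: "nat set" where "B \<equiv> fst ` set L"
abbreviation A :: "nat set" where "A \<equiv> snd ` set L"
abbreviation C :: "nat set" where "C \<equiv> {1..n} - B"
abbreviation D :: "nat set" where "D \<equiv> {1..n} - A"
abbreviation \<sigma> :: "nat \<Rightarrow> nat" where "\<sigma> \<equiv> cover_perm n L"

definition fill :: "nat \<Rightarrow> nat" where
  "fill x = sorted_list_of_set D ! card {y \<in> C. y < x}"

lemma B_subset: "B \<subseteq> {1..n}" and A_subset: "A \<subseteq> {1..n}"
  using interval by force+

lemma fst_less_iff_snd_less: "p \<in> set L \<Longrightarrow> q \<in> set L \<Longrightarrow> fst p < fst q \<longleftrightarrow> snd p < snd q"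
  using sorted_wrt_map_nth_less_iff[OF sorted_fst] sorted_wrt_map_nth_less_iff[OF sorted_snd]
  by (metis in_set_conv_nth)

lemma perm_B:
  assumes "(b, a) \<in> set L"
  shows "\<sigma> b = a"
proof -
  have "distinct (map fst L)" using sorted_fst strict_sorted_iff by blast
  then show ?thesis using assms by (simp add: cover_perm_def)
qed

lemma perm_C:
  assumes x: "x \<in> C"
  shows "\<sigma> x = fill x"
proof -
  have "map_of L x = None" using x by (simp add: map_of_eq_None_iff)
  then show ?thesis using x by (simp add: cover_perm_def fill_def)
qed

lemma perm_outside:
  assumes x: "x \<notin> {1..n}"
  shows "\<sigma> x = x"
proof -
  have "map_of L x = None" using x B_subset by (auto simp: map_of_eq_None_iff)
  then show ?thesis using x by (simp add: cover_perm_def del: atLeastAtMost_iff)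
qed

lemma card_C_eq_card_D: "card C = card D"
proof -
  have "distinct (map fst L)" "distinct (map snd L)"
    using sorted_fst sorted_snd strict_sorted_iff by blast+
  then have "card B = card A" by (metis distinct_card length_map set_map)
  then show ?thesis using B_subset A_subset by (simp add: card_Diff_subset finite_subset)
qed

lemma fill_in_D: "x \<in> C \<Longrightarrow> fill x \<in> D"
  unfolding fill_def
  using sorted_list_of_set_nth_mem[of D] card_less_less_card[of C x] card_C_eq_card_D by auto

lemma fill_strict_mono: "x \<in> C \<Longrightarrow> y \<in> C \<Longrightarrow> x < y \<Longrightarrow> fill x < fill y"
  unfolding fill_def
  using card_less_strict_mono[of C x y] card_less_less_card[of C y] card_C_eq_card_D
    sorted_wrt_nth_less[OF strict_sorted_list_of_set[of D]]
  by simp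

text \<open>If \<open>x \<in> C\<close> lies in the interval \<open>[b, a]\<close> of the \<open>i\<close>-th pair, then
  fewer than \<open>x - i - 1\<close> elements of \<open>C\<close> lie below \<open>x\<close>, while at least \<open>a - i - 1\<close> elements of
  \<open>D\<close> lie below \<open>a\<close> and at least \<open>x - i - 1\<close> below \<open>x\<close>.\<close>
lemma fill_less:
  assumes x: "x \<in> C" and p: "p \<in> set L" "fst p \<le> x" "x \<le> snd p"
  shows "fill x < snd p" "fill x < x"
proof -
  obtain i where i: "i < length L" "p = L ! i" using p by (auto simp: in_set_conv_nth)
  have x_range: "1 \<le> x" "x \<le> n" using x by auto
  have "fst p < x" using x p by (metis Diff_iff image_eqI le_neq_implies_less)
  define r where "r = card {y \<in> C. y < x}"
  have "r + card {y \<in> B. y < x} = x - 1"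
    unfolding r_def using card_less_Diff_add_card_less[OF B_subset] x_range by simp
  moreover have "card {y \<in> B. y < fst p} = i" using card_less_image_nth[OF sorted_fst i(1)] i by simp
  moreover have "card (insert (fst p) {y \<in> B. y < fst p}) \<le> card {y \<in> B. y < x}"
    using \<open>fst p < x\<close> p by (intro card_mono) auto
  ultimately have r: "r + Suc i \<le> x - 1" by simp
  have A_below: "card {y \<in> A. y < snd p} = i" using card_less_image_nth[OF sorted_snd i(1)] i by simp
  have "card {y \<in> D. y < snd p} + i = snd p - 1"
    using card_less_Diff_add_card_less[OF A_subset, of "snd p"] interval[OF p(1)] A_below by simp
  then have "r < card {y \<in> D. y < snd p}" using r p(3) x_range by linarith
  moreover have r_less: "r < card D"
    unfolding r_def using card_less_less_card[of C x] x card_C_eq_card_D by auto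
  ultimately show "fill x < snd p"
    unfolding fill_def r_def[symmetric] using sorted_list_of_set_nth_less_iff[of D r] by simp
  have "card {y \<in> A. y < x} \<le> card {y \<in> A. y < snd p}" using p(3) by (intro card_mono) auto
  moreover have "card {y \<in> D. y < x} + card {y \<in> A. y < x} = x - 1"
    using card_less_Diff_add_card_less[OF A_subset] x_range by simp
  ultimately have "r < card {y \<in> D. y < x}" using r A_below x_range by linarith
  then show "fill x < x"
    unfolding fill_def r_def[symmetric] using sorted_list_of_set_nth_less_iff[of D r] r_less by simp
qed

lemma C_covered:
  assumes "x \<in> C"
  shows "\<exists>p \<in> set L. fst p < x \<and> x \<le> snd p"
proof -
  obtain p where p: "p \<in> set L" "fst p \<le> x" "x \<le> snd p" using covers[of x] assms by auto
  moreover have "fst p \<noteq> x" using assms p(1) by auto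
  ultimately show ?thesis using le_neq_implies_less by blast
qed

lemma perm_strict_mono_on_B: "x \<in> B \<Longrightarrow> y \<in> B \<Longrightarrow> x < y \<Longrightarrow> \<sigma> x < \<sigma> y"
  using fst_less_iff_snd_less perm_B by force

lemma perm_strict_mono_on_C: "x \<in> C \<Longrightarrow> y \<in> C \<Longrightarrow> x < y \<Longrightarrow> \<sigma> x < \<sigma> y"
  using fill_strict_mono perm_C by simp

lemma permutes: "\<sigma> permutes {1..n}"
proof (rule bij_imp_permutes)
  have "\<sigma> ` B = A" using perm_B by force
  then have "bij_betw \<sigma> B A"
    using strict_mono_on_imp_inj_on[OF strict_mono_onI, OF perm_strict_mono_on_B] by (simp add: bij_betw_def)
  moreover have "bij_betw \<sigma> C D"
  proof -
    have "\<sigma> ` C \<subseteq> D" using fill_in_D perm_C by (metis image_subsetI)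
    moreover have "inj_on \<sigma> C" using strict_mono_on_imp_inj_on[OF strict_mono_onI, OF perm_strict_mono_on_C] .
    ultimately show ?thesis
      using card_C_eq_card_D by (simp add: bij_betw_def card_image card_subset_eq)
  qed
  ultimately have "bij_betw \<sigma> (B \<union> C) (A \<union> D)" by (rule bij_betw_combine) blast
  moreover have "B \<union> C = {1..n}" "A \<union> D = {1..n}" using B_subset A_subset by blast+
  ultimately show "bij_betw \<sigma> {1..n} {1..n}" by simp
qed (rule perm_outside)

lemma in_Av321: "\<sigma> \<in> Av321 n"
proof -
  have "\<sigma> u < \<sigma> v" if "u \<in> {1..n}" "v \<in> {1..n}" "u \<in> B \<longleftrightarrow> v \<in> B" "u < v" for u v
    using that perm_strict_mono_on_B perm_strict_mono_on_C by (cases "u \<in> B") auto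
  note increasing = this
  have "\<not> (1 \<le> i \<and> i < j \<and> j < k \<and> k \<le> n \<and> \<sigma> i > \<sigma> j \<and> \<sigma> j > \<sigma> k)" for i j k
  proof
    assume ijk: "1 \<le> i \<and> i < j \<and> j < k \<and> k \<le> n \<and> \<sigma> i > \<sigma> j \<and> \<sigma> j > \<sigma> k"
    then have range: "i \<in> {1..n}" "j \<in> {1..n}" "k \<in> {1..n}" by auto
    consider "i \<in> B \<longleftrightarrow> j \<in> B" | "j \<in> B \<longleftrightarrow> k \<in> B" | "i \<in> B \<longleftrightarrow> k \<in> B" by blast
    then show False
      using increasing[OF range(1,2)] increasing[OF range(2,3)] increasing[OF range(1,3)] ijk
      by cases auto
  qed
  then show ?thesis using permutes by (simp add: Av321_def)
qed

lemma ltr_max_eq_B: "ltr_max n \<sigma> = B"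
proof safe
  fix m assume m: "m \<in> ltr_max n \<sigma>"
  show "m \<in> B"
  proof (rule ccontr)
    assume "m \<notin> B"
    then have m_C: "m \<in> C" using m by (auto simp: ltr_max_def)
    then obtain p where p: "p \<in> set L" "fst p < m" "m \<le> snd p" using C_covered by blast
    have "\<sigma> (fst p) < \<sigma> m" using m p interval[OF p(1)] by (auto simp: ltr_max_def)
    moreover have "\<sigma> m < snd p" using fill_less[OF m_C p(1)] p perm_C[OF m_C] by simp
    ultimately show False using perm_B[of "fst p" "snd p"] p by simp
  qed
next
  fix p assume p: "p \<in> set L"
  have "\<sigma> j < \<sigma> (fst p)" if j: "1 \<le> j" "j < fst p" for j
  proof (cases "j \<in> B")
    case True
    then show ?thesis using perm_strict_mono_on_B[of j "fst p"] j p by blast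
  next
    case False
    then have j_C: "j \<in> C" using j interval[OF p] by auto
    then obtain q where q: "q \<in> set L" "fst q < j" "j \<le> snd q" using C_covered by blast
    have "\<sigma> j < snd q" using fill_less[OF j_C q(1)] q perm_C[OF j_C] by simp
    moreover have "snd q < snd p" using fst_less_iff_snd_less[OF q(1) p] q j by simp
    ultimately show ?thesis using perm_B[of "fst p" "snd p"] p by simp
  qed
  then show "fst p \<in> ltr_max n \<sigma>" using interval[OF p] by (auto simp: ltr_max_def)
qed

lemma ltr_max_graph: "{(m, \<sigma> m) | m. m \<in> ltr_max n \<sigma>} = set L"
  unfolding ltr_max_eq_B using perm_B by force

lemma fixed_points: "{x \<in> {1..n}. \<sigma> x = x} = {b. (b, b) \<in> set L}"
proof safe
  fix x assume x: "x \<in> {1..n}" "\<sigma> x = x"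
  show "(x, x) \<in> set L"
  proof (cases "x \<in> B")
    case True
    then obtain a where "(x, a) \<in> set L" by auto
    then show ?thesis using perm_B x(2) by metis
  next
    case False
    then have x_C: "x \<in> C" using x by auto
    obtain p where "p \<in> set L" "fst p < x" "x \<le> snd p" using C_covered[OF x_C] by blast
    then have "fill x < x" using fill_less(2)[OF x_C] by simp
    then show ?thesis using perm_C[OF x_C] x by simp
  qed
next
  fix b assume "(b, b) \<in> set L"
  then show "b \<in> {1..n}" "\<sigma> b = b" using interval[of "(b, b)"] perm_B by auto
qed

end

section \<open>Trees give 321-avoiding permutations\<close>

definition leaf_graph :: "ptree \<Rightarrow> (nat \<times> nat) list" where
  "leaf_graph t = map (\<lambda>(s, p). (s - p + 1, s)) (leaf_data t)"

lemma leaf_graph_conv_filter: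
  "leaf_graph t = map (\<lambda>j. (j - fst (preorder 0 t ! j) + 1, j))
     (filter (\<lambda>j. snd (preorder 0 t ! j)) [0..<nverts t])"
  by (simp add: leaf_graph_def leaf_data_conv_filter)

lemma tree_seq_preorder: "tree_seq (preorder 0 t)"
  by unfold_locales (rule preorder_seq_preorder)

lemma leaf_data_depth_le: "(s, p) \<in> set (leaf_data t) \<Longrightarrow> p \<le> s"
  using tree_seq.depth_le[OF tree_seq_preorder] by (auto simp: set_leaf_data leaves_def)

lemma set_leaf_data_conv_leaf_graph:
  "set (leaf_data t) = (\<lambda>(b, s). (s, s + 1 - b)) ` set (leaf_graph t)"
proof -
  have "(\<lambda>(b, s). (s, s + 1 - b)) ((\<lambda>(s, p). (s - p + 1, s)) x) = x"
    if "x \<in> set (leaf_data t)" for x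
    using leaf_data_depth_le[of "fst x" "snd x" t] that by (cases x) simp
  then show ?thesis unfolding leaf_graph_def set_map image_image by simp
qed

lemma leafA_eq: "leafA t = snd ` set (leaf_graph t)"
  unfolding leafA_def leaf_graph_def set_map image_image by (simp add: case_prod_beta)

lemma leafB_eq: "leafB t = fst ` set (leaf_graph t)"
  unfolding leafB_def leaf_graph_def set_map image_image by (simp add: case_prod_beta)

lemma tau_eq_cover_perm: "tau t = cover_perm (nverts t - 1) (leaf_graph t)"
proof -
  have "map (\<lambda>(s, p). (s - p + 1, s)) (leaf_data t) = leaf_graph t"
    by (simp add: leaf_graph_def)
  then show ?thesis unfolding tau_def cover_perm_def Let_def leafA_eq leafB_eq by simp
qed

context
  fixes t :: ptree and n :: nat
  assumes nverts: "nverts t = Suc n" and n_pos: "1 \<le> n"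
begin

interpretation tree_seq "preorder 0 t" by (rule tree_seq_preorder)

lemma length_preorder_0: "length (preorder 0 t) = Suc n"
  by (simp add: length_preorder nverts)

lemma leaf_bounds:
  assumes "j \<le> n" "is_leaf j"
  shows "1 \<le> depth j" "depth j \<le> j" "1 \<le> j"
proof -
  show "1 \<le> j" using root_not_leaf assms n_pos length_preorder_0 by (cases j) auto
  then show "1 \<le> depth j" using depth_pos[of j] assms length_preorder_0 by simp
  show "depth j \<le> j" using depth_le[of j] assms length_preorder_0 by simp
qed

lemma leaf_data_bounds: "(s, p) \<in> set (leaf_data t) \<Longrightarrow> 1 \<le> p \<and> p \<le> s \<and> s \<le> n"
  using leaf_bounds length_preorder_0 by (auto simp: set_leaf_data leaves_def)

lemma interval_cover_leaf_graph: "interval_cover n (leaf_graph t)"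
proof
  show "sorted_wrt (<) (map fst (leaf_graph t))"
    unfolding leaf_graph_conv_filter map_map comp_def fst_conv sorted_wrt_map
    using leaf_start_less length_preorder_0 by (intro sorted_wrt_filter_upt) (simp add: nverts)
  show "sorted_wrt (<) (map snd (leaf_graph t))"
    unfolding leaf_graph_conv_filter map_map comp_def snd_conv sorted_wrt_map
    by (rule sorted_wrt_filter_upt) simp
  show "1 \<le> fst p \<and> fst p \<le> snd p \<and> snd p \<le> n" if "p \<in> set (leaf_graph t)" for p
    using that leaf_data_bounds by (fastforce simp: leaf_graph_def)
  fix x assume "1 \<le> x" "x \<le> n"
  then obtain j where j: "is_leaf j" "j < Suc n" "x \<le> j" "j - depth j < x"
    using ex_leaf_covering[of x] length_preorder_0 by auto
  then have "(j - depth j + 1, j) \<in> set (leaf_graph t)"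
    by (auto simp: leaf_graph_conv_filter nverts simp del: upt_Suc)
  then show "\<exists>p \<in> set (leaf_graph t). fst p \<le> x \<and> x \<le> snd p" using j by force
qed

lemma fixed_leaves: "{b. (b, b) \<in> set (leaf_graph t)} = {s. (s, 1) \<in> set (leaf_data t)}"
proof -
  have "(b, b) \<in> set (leaf_graph t) \<longleftrightarrow> (\<exists>p. (b, p) \<in> set (leaf_data t) \<and> b - p + 1 = b)" for b
    by (force simp: leaf_graph_def)
  moreover have "b - p + 1 = b \<longleftrightarrow> p = 1" if "(b, p) \<in> set (leaf_data t)" for b p
    using leaf_data_bounds[OF that] by linarith
  ultimately show ?thesis by blast
qed

end

section \<open>Every 321-avoiding permutation comes from a unique tree\<close>

lemma Av321_permutes: "\<sigma> \<in> Av321 n \<Longrightarrow> \<sigma> permutes {1..n}"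
  by (simp add: Av321_def)

lemma Av321_strict_mono_on_non_ltr_max:
  assumes \<sigma>: "\<sigma> \<in> Av321 n" and x: "x \<in> {1..n} - ltr_max n \<sigma>" and y: "y \<in> {1..n}" and "x < y"
  shows "\<sigma> x < \<sigma> y"
proof (rule ccontr)
  have inj: "inj \<sigma>" using permutes_inj[OF Av321_permutes[OF \<sigma>]] .
  assume "\<not> \<sigma> x < \<sigma> y"
  then have "\<sigma> y < \<sigma> x" using inj \<open>x < y\<close> by (metis inj_eq nat_neq_iff)
  obtain j where j: "1 \<le> j" "j < x" "\<not> \<sigma> j < \<sigma> x" using x unfolding ltr_max_def by blast
  then have "\<sigma> x < \<sigma> j" using inj by (metis inj_eq nat_neq_iff)
  then show False
    using \<sigma> j \<open>x < y\<close> y \<open>\<sigma> y < \<sigma> x\<close> unfolding Av321_def by fastforce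
qed

lemma Av321_non_ltr_max_eq:
  assumes \<sigma>: "\<sigma> \<in> Av321 n" and x: "x \<in> {1..n} - ltr_max n \<sigma>"
  shows "\<sigma> x = sorted_list_of_set ({1..n} - \<sigma> ` ltr_max n \<sigma>)
                 ! card {y \<in> {1..n} - ltr_max n \<sigma>. y < x}"
proof (rule strict_mono_on_eq_sorted_list_of_set_nth[OF _ _ _ x])
  have perm: "\<sigma> permutes {1..n}" using Av321_permutes[OF \<sigma>] .
  have "ltr_max n \<sigma> \<subseteq> {1..n}" by (auto simp: ltr_max_def)
  then show "\<sigma> ` ({1..n} - ltr_max n \<sigma>) = {1..n} - \<sigma> ` ltr_max n \<sigma>"
    using permutes_inj[OF perm] permutes_image[OF perm] by (simp add: image_set_diff)
qed (use Av321_strict_mono_on_non_ltr_max[OF \<sigma>] in auto)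

lemma Av321_eqI:
  assumes \<sigma>1: "\<sigma>1 \<in> Av321 n" and \<sigma>2: "\<sigma>2 \<in> Av321 n"
    and graph: "{(m, \<sigma>1 m) | m. m \<in> ltr_max n \<sigma>1} = {(m, \<sigma>2 m) | m. m \<in> ltr_max n \<sigma>2}"
  shows "\<sigma>1 = \<sigma>2"
proof
  fix x
  have M: "ltr_max n \<sigma>2 = ltr_max n \<sigma>1"
    using arg_cong[OF graph, of "image fst"] by (simp add: image_Collect)
  have agree: "\<sigma>1 m = \<sigma>2 m" if "m \<in> ltr_max n \<sigma>1" for m
    using graph that by blast
  then have ltr_values_eq: "\<sigma>2 ` ltr_max n \<sigma>2 = \<sigma>1 ` ltr_max n \<sigma>1" unfolding M by auto
  consider "x \<notin> {1..n}" | "x \<in> ltr_max n \<sigma>1" | "x \<in> {1..n} - ltr_max n \<sigma>1" by blast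
  then show "\<sigma>1 x = \<sigma>2 x"
  proof cases
    case 1
    then show ?thesis
      using permutes_not_in[OF Av321_permutes[OF \<sigma>1]] permutes_not_in[OF Av321_permutes[OF \<sigma>2]] by simp
  next
    case 2
    then show ?thesis by (rule agree)
  next
    case 3
    then show ?thesis
      using Av321_non_ltr_max_eq[OF \<sigma>1 3] Av321_non_ltr_max_eq[OF \<sigma>2] M ltr_values_eq by simp
  qed
qed

locale Av321_perm =
  fixes n :: nat and \<sigma> :: "nat \<Rightarrow> nat"
  assumes avoids: "\<sigma> \<in> Av321 n" and n_pos: "1 \<le> n"
begin

definition first_at_least :: "nat \<Rightarrow> nat" where
  "first_at_least j = (LEAST x. 1 \<le> x \<and> j \<le> \<sigma> x)"

definition ltr_values :: "nat set" where
  "ltr_values = \<sigma> ` ltr_max n \<sigma>"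

definition depth_seq :: "(nat \<times> bool) list" where
  "depth_seq = map (\<lambda>j. (j + 1 - first_at_least j, j \<in> ltr_values)) [0..<Suc n]"

lemma perm_in_range: "x \<in> {1..n} \<Longrightarrow> \<sigma> x \<in> {1..n}"
  using permutes_in_image[OF Av321_permutes[OF avoids]] by simp

text \<open>Pigeonhole: \<open>\<sigma>\<close> cannot map \<open>{1..j}\<close> into \<open>{1..<j}\<close>.\<close>
lemma ex_value_at_least: "j \<le> n \<Longrightarrow> \<exists>x. 1 \<le> x \<and> x \<le> max 1 j \<and> j \<le> \<sigma> x"
proof (rule ccontr)
  assume j: "j \<le> n" and none: "\<not> (\<exists>x. 1 \<le> x \<and> x \<le> max 1 j \<and> j \<le> \<sigma> x)"
  then have small: "\<sigma> x < j" if "x \<in> {1..j}" for x using that by force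
  have "\<not> j \<le> \<sigma> 1" using none by auto
  then have "j \<noteq> 0" by auto
  have "\<sigma> ` {1..j} \<subseteq> {1..<j}" using small perm_in_range j by fastforce
  moreover have "inj_on \<sigma> {1..j}" using permutes_inj[OF Av321_permutes[OF avoids]] inj_on_subset by blast
  ultimately have "card {1..j} \<le> card {1..<j}" by (metis card_image card_mono finite_atLeastLessThan)
  then show False using \<open>j \<noteq> 0\<close> by simp
qed

lemma first_at_least:
  assumes "j \<le> n"
  shows "1 \<le> first_at_least j" "j \<le> \<sigma> (first_at_least j)" "first_at_least j \<le> max 1 j"
    "\<And>y. 1 \<le> y \<Longrightarrow> y < first_at_least j \<Longrightarrow> \<sigma> y < j"
proof -
  obtain x where x: "1 \<le> x" "x \<le> max 1 j" "j \<le> \<sigma> x" using ex_value_at_least[OF assms] by blast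
  show "1 \<le> first_at_least j" "j \<le> \<sigma> (first_at_least j)"
    unfolding first_at_least_def using LeastI[of "\<lambda>x. 1 \<le> x \<and> j \<le> \<sigma> x" x] x by auto
  have "first_at_least j \<le> x" unfolding first_at_least_def using x by (intro Least_le) simp
  then show "first_at_least j \<le> max 1 j" using x by simp
  show "\<sigma> y < j" if "1 \<le> y" "y < first_at_least j" for y
    using not_less_Least[of y "\<lambda>x. 1 \<le> x \<and> j \<le> \<sigma> x"] that unfolding first_at_least_def by auto
qed

lemma first_at_least_le: "1 \<le> j \<Longrightarrow> j \<le> n \<Longrightarrow> first_at_least j \<le> j"
  using first_at_least(3) by fastforce

lemma first_at_least_mono: "Suc j \<le> n \<Longrightarrow> first_at_least j \<le> first_at_least (Suc j)"
  using first_at_least(1,2)[of "Suc j"] unfolding first_at_least_def[of j] by (intro Least_le) simp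

lemma first_at_least_ltr_max: "j \<le> n \<Longrightarrow> first_at_least j \<in> ltr_max n \<sigma>"
  using first_at_least[of j] n_pos by (fastforce simp: ltr_max_def intro: order.strict_trans2)

lemma first_at_least_ltr_value: "m \<in> ltr_max n \<sigma> \<Longrightarrow> first_at_least (\<sigma> m) = m"
  unfolding first_at_least_def
proof (rule Least_equality)
  assume m: "m \<in> ltr_max n \<sigma>"
  then show "1 \<le> m \<and> \<sigma> m \<le> \<sigma> m" by (simp add: ltr_max_def)
  show "m \<le> y" if "1 \<le> y \<and> \<sigma> m \<le> \<sigma> y" for y
    using m that by (auto simp: ltr_max_def not_le)
qed

lemma ltr_max_le_value: "m \<in> ltr_max n \<sigma> \<Longrightarrow> m \<le> \<sigma> m"
  using first_at_least_le[of "\<sigma> m"] first_at_least_ltr_value[of m] perm_in_range[of m]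
  by (simp add: ltr_max_def)

lemma mem_ltr_values_iff: "j \<le> n \<Longrightarrow> j \<in> ltr_values \<longleftrightarrow> 1 \<le> j \<and> \<sigma> (first_at_least j) = j"
proof
  assume "j \<le> n" "j \<in> ltr_values"
  then obtain m where m: "m \<in> ltr_max n \<sigma>" "j = \<sigma> m" by (auto simp: ltr_values_def)
  then have "m \<in> {1..n}" by (simp add: ltr_max_def)
  then show "1 \<le> j \<and> \<sigma> (first_at_least j) = j"
    using m first_at_least_ltr_value perm_in_range by auto
next
  assume "j \<le> n" "1 \<le> j \<and> \<sigma> (first_at_least j) = j"
  then show "j \<in> ltr_values"
    using first_at_least_ltr_max unfolding ltr_values_def by (metis image_eqI)
qed

lemma depth_seq_nth: "j \<le> n \<Longrightarrow> depth_seq ! j = (j + 1 - first_at_least j, j \<in> ltr_values)"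
  unfolding depth_seq_def by (simp del: upt_Suc add: nth_map_upt)

lemma length_depth_seq: "length depth_seq = Suc n"
  by (simp add: depth_seq_def)

lemma preorder_step_depth_seq:
  assumes j: "Suc j \<le> n"
  shows "preorder_step (depth_seq ! j) (depth_seq ! Suc j)"
proof -
  have bounds: "first_at_least (Suc j) \<le> Suc j" "first_at_least j \<le> Suc j"
    using first_at_least_le[of "Suc j"] first_at_least(3)[of j] j by simp_all
  show ?thesis
  proof (cases "j \<in> ltr_values")
    case True
    then have "\<sigma> (first_at_least j) = j" using mem_ltr_values_iff j by simp
    then have "first_at_least (Suc j) \<noteq> first_at_least j" using first_at_least(2)[OF j] by auto
    then have "first_at_least j < first_at_least (Suc j)" using first_at_least_mono[OF j] by simp
    then show ?thesis using True depth_seq_nth[of j] depth_seq_nth[OF j] j bounds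
      by (simp add: preorder_step_def)
  next
    case False
    have "\<sigma> (first_at_least j) \<noteq> j"
    proof (cases "j = 0")
      case True
      have "first_at_least j \<in> {1..n}" using first_at_least(1,3)[of j] j n_pos by auto
      then show ?thesis using perm_in_range True by fastforce
    qed (use False mem_ltr_values_iff j in simp)
    then have "Suc j \<le> \<sigma> (first_at_least j)" using first_at_least(2)[of j] j by simp
    then have "first_at_least (Suc j) \<le> first_at_least j"
      unfolding first_at_least_def[of "Suc j"] using first_at_least(1)[of j] j by (intro Least_le) simp
    then have "first_at_least (Suc j) = first_at_least j" using first_at_least_mono[OF j] by simp
    then show ?thesis using False depth_seq_nth[of j] depth_seq_nth[OF j] j bounds
      by (simp add: preorder_step_def)
  qed
qed

lemma preorder_seq_depth_seq: "preorder_seq 0 depth_seq"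
proof (rule preorder_seq_of_nth)
  show "depth_seq \<noteq> []" by (simp add: depth_seq_def)
  show "fst (depth_seq ! 0) = 0" using depth_seq_nth[of 0] first_at_least(1)[of 0] by simp
  show "0 < fst (depth_seq ! j)" if "0 < j" "j < length depth_seq" for j
    using that depth_seq_nth[of j] first_at_least_le[of j] by (simp add: length_depth_seq)
  show "preorder_step (depth_seq ! j) (depth_seq ! Suc j)" if "Suc j < length depth_seq" for j
    using that preorder_step_depth_seq by (simp add: length_depth_seq)
  have "\<sigma> (first_at_least n) = n"
    using first_at_least(1,2,3)[of n] perm_in_range[of "first_at_least n"] n_pos by fastforce
  then have "n \<in> ltr_values" using mem_ltr_values_iff[of n] n_pos by simp
  then show "snd (depth_seq ! (length depth_seq - 1))" using depth_seq_nth[of n] by (simp add: length_depth_seq)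
qed

lemma leaves_depth_seq: "leaves depth_seq = (\<lambda>m. (\<sigma> m, \<sigma> m + 1 - m)) ` ltr_max n \<sigma>"
proof -
  have "ltr_values \<subseteq> {..n}" using perm_in_range by (force simp: ltr_values_def ltr_max_def)
  then have "leaves depth_seq = (\<lambda>j. (j, j + 1 - first_at_least j)) ` ltr_values"
    unfolding leaves_def length_depth_seq by (force simp: depth_seq_nth less_Suc_eq_le)
  then show ?thesis unfolding ltr_values_def image_image using first_at_least_ltr_value by simp
qed

lemma ex_tree: "\<exists>t. nverts t = Suc n \<and> tau t = \<sigma>"
proof -
  obtain t where t: "preorder 0 t = depth_seq"
    using ex_preorder_if_preorder_seq[OF preorder_seq_depth_seq] by blast
  have nverts: "nverts t = Suc n" using length_preorder[of 0 t] t by (simp add: length_depth_seq)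
  interpret interval_cover n "leaf_graph t" by (rule interval_cover_leaf_graph[OF nverts n_pos])
  have "set (leaf_graph t) = (\<lambda>(s, p). (s - p + 1, s)) ` leaves depth_seq"
    by (simp add: leaf_graph_def set_leaf_data t)
  also have "\<dots> = {(m, \<sigma> m) | m. m \<in> ltr_max n \<sigma>}"
  proof -
    have "(\<lambda>(s, p). (s - p + 1, s)) (\<sigma> m, \<sigma> m + 1 - m) = (m, \<sigma> m)" if "m \<in> ltr_max n \<sigma>" for m
      using ltr_max_le_value[OF that] that by (auto simp: ltr_max_def)
    then show ?thesis unfolding leaves_depth_seq image_image by force
  qed
  finally have "tau t = \<sigma>"
    using Av321_eqI[OF in_Av321 avoids] ltr_max_graph tau_eq_cover_perm[of t] nverts by simp
  then show ?thesis using nverts by blast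
qed

end

lemma tau_inj_on:
  assumes "1 \<le> n"
  shows "inj_on tau {t. nverts t = Suc n}"
proof (rule inj_onI)
  fix t t' assume "t \<in> {t. nverts t = Suc n}" "t' \<in> {t. nverts t = Suc n}" and tau: "tau t = tau t'"
  then have t: "nverts t = Suc n" and t': "nverts t' = Suc n" by simp_all
  interpret T: interval_cover n "leaf_graph t" by (rule interval_cover_leaf_graph[OF t assms])
  interpret T': interval_cover n "leaf_graph t'" by (rule interval_cover_leaf_graph[OF t' assms])
  have "set (leaf_graph t) = set (leaf_graph t')"
    using T.ltr_max_graph T'.ltr_max_graph tau tau_eq_cover_perm[of t] tau_eq_cover_perm[of t'] t t'
    by simp
  then have "leaves (preorder 0 t') = leaves (preorder 0 t)"
    by (simp add: set_leaf_data_conv_leaf_graph flip: set_leaf_data)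
  then have "preorder 0 t' = preorder 0 t"
    using tree_seq.eq_if_leaves_eq[OF tree_seq_preorder tree_seq_preorder] t t'
    by (simp add: length_preorder)
  then show "t = t'" by (rule preorder_inj[symmetric])
qed

theorem mainTheorem7:
  fixes n :: nat
  assumes "n \<ge> 1"
  shows "(\<forall>t. nverts t = n + 1 \<longrightarrow>
            sorted_wrt (<) (map fst (leaf_data t))
          \<and> sorted_wrt (<) (map (\<lambda>(s, p). s - p + 1) (leaf_data t))
          \<and> leafA t \<subseteq> {1..n} \<and> leafB t \<subseteq> {1..n}
          \<and> tau t \<in> Av321 n
          \<and> {(m, tau t m) | m. m \<in> ltr_max n (tau t)}
              = set (map (\<lambda>(s, p). (s - p + 1, s)) (leaf_data t))
          \<and> {x \<in> {1..n}. tau t x = x} = {s. (s, 1) \<in> set (leaf_data t)})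
       \<and> bij_betw tau {t. nverts t = n + 1} (Av321 n)"
proof (intro conjI allI impI)
  fix t assume "nverts t = n + 1"
  then have t: "nverts t = Suc n" by simp
  interpret interval_cover n "leaf_graph t" by (rule interval_cover_leaf_graph[OF t assms])
  have tau: "tau t = cover_perm n (leaf_graph t)" using tau_eq_cover_perm[of t] t by simp
  have "map fst (leaf_data t) = map snd (leaf_graph t)"
    and "map (\<lambda>(s, p). s - p + 1) (leaf_data t) = map fst (leaf_graph t)"
    by (simp_all add: leaf_graph_def case_prod_beta)
  then show "sorted_wrt (<) (map fst (leaf_data t))"
    and "sorted_wrt (<) (map (\<lambda>(s, p). s - p + 1) (leaf_data t))"
    using sorted_fst sorted_snd by simp_all
  show "leafA t \<subseteq> {1..n}" "leafB t \<subseteq> {1..n}"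
    using A_subset B_subset by (simp_all add: leafA_eq leafB_eq)
  show "tau t \<in> Av321 n" using in_Av321 tau by simp
  show "{(m, tau t m) | m. m \<in> ltr_max n (tau t)} = set (map (\<lambda>(s, p). (s - p + 1, s)) (leaf_data t))"
    using ltr_max_graph tau by (simp add: leaf_graph_def)
  show "{x \<in> {1..n}. tau t x = x} = {s. (s, 1) \<in> set (leaf_data t)}"
    using fixed_points fixed_leaves[OF t assms] tau by simp
next
  have "tau ` {t. nverts t = Suc n} \<subseteq> Av321 n"
    using interval_cover.in_Av321[OF interval_cover_leaf_graph[OF _ assms]] tau_eq_cover_perm by auto
  moreover have "Av321 n \<subseteq> tau ` {t. nverts t = Suc n}"
    using Av321_perm.ex_tree assms by (force simp: Av321_perm_def)
  ultimately show "bij_betw tau {t. nverts t = n + 1} (Av321 n)"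
    using tau_inj_on[OF assms] by (simp add: bij_betw_def)
qed

end
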